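(* Let $G$ be a finite group generated by a class $D$ of conjugate $3$-transpositions. Then every element of $D$ is $2$-radical in $G$; that is, for every $d\in D$ and all $a_1,a_2\in G$, the subgroup $\langle [a_1,d],[a_2,d]\rangle$ is solvable.
   Context: A class $D$ of conjugate involutions of a finite group $G$ which generates $G$ is a class of conjugate $3$-transpositions if any two non-commuting elements of $D$ generate a dihedral group of order $6$ (equivalently, the product of any two elements of $D$ has order $1$, $2$ or $3$). The commutator is $[x,y]=xyx^{-1}y^{-1}$. *)

theory Defs
  imports "HOL-Algebra.Algebra"
begin

definition commutator :: "('a, 'b) monoid_scheme \<Rightarrow> 'a \<Rightarrow> 'a \<Rightarrow> 'a" where
  "commutator G x y = x \<otimes>\<^bsub>G\<^esub> y \<otimes>\<^bsub>G\<^esub> inv\<^bsub>G\<^esub> x \<otimes>\<^bsub>G\<^esub> inv\<^bsub>G\<^esub> y"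

definition three_transp_class :: "('a, 'b) monoid_scheme \<Rightarrow> 'a set \<Rightarrow> bool" where
  "three_transp_class G D \<longleftrightarrow>
     (\<exists>d0 \<in> carrier G. D = {g \<otimes>\<^bsub>G\<^esub> d0 \<otimes>\<^bsub>G\<^esub> inv\<^bsub>G\<^esub> g | g. g \<in> carrier G}) \<and>
     (\<forall>d \<in> D. group.ord G d = 2) \<and>
     generate G D = carrier G \<and>
     (\<forall>x \<in> D. \<forall>y \<in> D. group.ord G (x \<otimes>\<^bsub>G\<^esub> y) \<in> {1, 2, 3})"

end

theory Submission
  imports Defs
begin

(* Write e_i = a_i d a_i^-1, an element of D.  Since d is an involution, [a_i, d] = e_i d, so
   the subgroup lies in the subgroup generated by d, e_1, e_2.  Three involutions a, b, c whose
   pairwise products have order 1, 2 or 3 satisfy, pair by pair, the braid relation xyx = yxy or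
   the commutation relation xy = yx.  Hence they generate a quotient of a Coxeter group of rank 3
   of type A1^3, A1 x A2, A3 or affine A2, and all of these have derived length at most 3.
   For each of the eight patterns of relations this is shown through the chain
   <a,b,c>' \<subseteq> <ab,ac>, <ab,ac>' \<subseteq> <T>, <T>' = 1 for an explicit list T of words,
   using word-rewriting certificates that are checked by evaluation. *)

section \<open>Derived subgroups of generated subgroups\<close>

context group
begin

lemma inv_mult_cancel_left [simp]:
  "x \<in> carrier G \<Longrightarrow> y \<in> carrier G \<Longrightarrow> inv x \<otimes> (x \<otimes> y) = y"
  by (simp add: m_assoc[symmetric])

lemma mult_inv_cancel_left [simp]:
  "x \<in> carrier G \<Longrightarrow> y \<in> carrier G \<Longrightarrow> x \<otimes> (inv x \<otimes> y) = y"
  by (simp add: m_assoc[symmetric])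

lemma conj_generate_in_subgroup:
  assumes T: "T \<subseteq> carrier G" and x: "x \<in> carrier G" and N: "subgroup N G"
    and conj: "\<And>t. t \<in> T \<Longrightarrow> x \<otimes> t \<otimes> inv x \<in> N"
    and h: "h \<in> generate G T"
  shows "x \<otimes> h \<otimes> inv x \<in> N"
  using h
proof induction
  case one
  then show ?case using x by (simp add: subgroup.one_closed[OF N])
next
  case (incl t)
  then show ?case by (rule conj)
next
  case (inv t)
  then have "x \<otimes> inv t \<otimes> inv x = inv (x \<otimes> t \<otimes> inv x)"
    using T x by (auto simp: inv_mult_group m_assoc)
  then show ?case using inv conj subgroup.m_inv_closed[OF N] by auto
next
  case (eng h1 h2)
  then have "x \<otimes> (h1 \<otimes> h2) \<otimes> inv x = (x \<otimes> h1 \<otimes> inv x) \<otimes> (x \<otimes> h2 \<otimes> inv x)"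
    using generate_in_carrier[OF T] x by (simp add: m_assoc)
  then show ?case using eng subgroup.m_closed[OF N] by auto
qed

lemma generate_normalizes:
  assumes S: "S \<subseteq> carrier G" and N: "subgroup N G"
    and norm: "\<And>s n. s \<in> S \<Longrightarrow> n \<in> N \<Longrightarrow> s \<otimes> n \<otimes> inv s \<in> N \<and> inv s \<otimes> n \<otimes> s \<in> N"
    and g: "g \<in> generate G S" and n: "n \<in> N"
  shows "g \<otimes> n \<otimes> inv g \<in> N"
  using g n
proof (induction arbitrary: n)
  case one
  then show ?case using subgroup.subset[OF N] by auto
next
  case (incl s)
  then show ?case using norm by blast
next
  case (inv s)
  then show ?case using norm S by auto
next
  case (eng h1 h2)
  have "h1 \<otimes> h2 \<otimes> n \<otimes> inv (h1 \<otimes> h2) = h1 \<otimes> (h2 \<otimes> n \<otimes> inv h2) \<otimes> inv h1"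
    using eng generate_in_carrier[OF S] subgroup.subset[OF N] by (auto simp: m_assoc inv_mult_group)
  then show ?case using eng by auto
qed

lemma commutator_generator_in_subgroup:
  assumes S: "S \<subseteq> carrier G" and N: "subgroup N G"
    and norm: "\<And>g n. g \<in> generate G S \<Longrightarrow> n \<in> N \<Longrightarrow> g \<otimes> n \<otimes> inv g \<in> N"
    and comm: "\<And>s t. s \<in> S \<Longrightarrow> t \<in> S \<Longrightarrow> commutator G s t \<in> N"
    and s: "s \<in> S" and k: "k \<in> generate G S"
  shows "commutator G s k \<in> N"
  using k
proof induction
  case one
  have "s \<in> carrier G" using s S by blast
  then show ?case by (simp add: commutator_def subgroup.one_closed[OF N])
next
  case (incl t)
  then show ?case using comm s by blast
next
  case (inv t)
  have "s \<in> carrier G" "t \<in> carrier G" using s inv S by blast+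
  then have "commutator G s (inv t) = inv t \<otimes> inv (commutator G s t) \<otimes> inv (inv t)"
    by (simp add: commutator_def m_assoc inv_mult_group)
  then show ?case
    using inv comm s norm generate.inv subgroup.m_inv_closed[OF N] by metis
next
  case (eng h1 h2)
  have "commutator G s (h1 \<otimes> h2) = commutator G s h1 \<otimes> (h1 \<otimes> commutator G s h2 \<otimes> inv h1)"
    using eng s S generate_in_carrier[OF S] by (auto simp: commutator_def m_assoc inv_mult_group)
  then show ?case using eng norm subgroup.m_closed[OF N] by auto
qed

lemma derived_generate_subset:
  assumes S: "S \<subseteq> carrier G" and N: "subgroup N G"
    and norm: "\<And>g n. g \<in> generate G S \<Longrightarrow> n \<in> N \<Longrightarrow> g \<otimes> n \<otimes> inv g \<in> N"
    and comm: "\<And>s t. s \<in> S \<Longrightarrow> t \<in> S \<Longrightarrow> commutator G s t \<in> N"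
  shows "derived G (generate G S) \<subseteq> N"
proof -
  have "commutator G h k \<in> N" if h: "h \<in> generate G S" and k: "k \<in> generate G S" for h k
    using h
  proof induction
    case one
    then show ?case
      using k generate_in_carrier[OF S] by (auto simp: commutator_def subgroup.one_closed[OF N])
  next
    case (incl s)
    then show ?case using commutator_generator_in_subgroup[OF S N norm comm _ k] by blast
  next
    case (inv s)
    have "commutator G (inv s) k = inv s \<otimes> inv (commutator G s k) \<otimes> inv (inv s)"
      using inv k S generate_in_carrier[OF S] by (auto simp: commutator_def m_assoc inv_mult_group)
    then show ?case
      using inv commutator_generator_in_subgroup[OF S N norm comm _ k] norm generate.inv
        subgroup.m_inv_closed[OF N] by metis
  next
    case (eng h1 h2)
    have "commutator G (h1 \<otimes> h2) k = h1 \<otimes> commutator G h2 k \<otimes> inv h1 \<otimes> commutator G h1 k"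
      using eng k generate_in_carrier[OF S] by (auto simp: commutator_def m_assoc inv_mult_group)
    then show ?case using eng norm subgroup.m_closed[OF N] by auto
  qed
  then have "derived_set G (generate G S) \<subseteq> N"
    by (auto simp: commutator_def)
  then show ?thesis
    unfolding derived_def by (rule generate_subgroup_incl[OF _ N])
qed

end

section \<open>Rewriting certificates for words in three involutions\<close>

type_synonym rewrite_system = "(nat list \<times> nat list) list"

type_synonym certificate = "(nat \<times> nat) list \<times> (nat \<times> bool) list"

fun rewrite_at :: "rewrite_system \<Rightarrow> nat list \<Rightarrow> nat \<times> nat \<Rightarrow> nat list" where
  "rewrite_at R w (p, k) =
     (if k < length R \<and> take (length (fst (R ! k))) (drop p w) = fst (R ! k)
      then take p w @ snd (R ! k) @ drop (p + length (fst (R ! k))) w else w)"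

definition rewrite :: "rewrite_system \<Rightarrow> nat list \<Rightarrow> (nat \<times> nat) list \<Rightarrow> nat list" where
  "rewrite R w steps = foldl (rewrite_at R) w steps"

definition factor :: "nat list list \<Rightarrow> nat \<times> bool \<Rightarrow> nat list" where
  "factor T jr = (if fst jr < length T then (if snd jr then rev (T ! fst jr) else T ! fst jr) else [])"

(* A certificate (steps, factors) shows that w represents an element of the subgroup generated
   by the words of T: rewriting w at the given (position, rule) steps yields a product of words
   of T, each possibly reversed, and reversal is inversion since all letters are involutions. *)
definition certifies :: "rewrite_system \<Rightarrow> nat list list \<Rightarrow> certificate \<Rightarrow> nat list \<Rightarrow> bool" where
  "certifies R T c w \<longleftrightarrow> rewrite R w (fst c) = concat (map (factor T) (snd c))"

(* Conjugation by a letter u is the word u t u, as letters are involutions; the last conjunct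
   keeps the words of S inside the subgroup generated by the three letters. *)
definition derived_step_certified ::
    "rewrite_system \<Rightarrow> nat list list \<Rightarrow> nat list list \<Rightarrow> certificate list \<Rightarrow> bool" where
  "derived_step_certified R S T C \<longleftrightarrow>
     (\<forall>u \<in> set [0, 1, 2]. \<forall>t \<in> set T. \<exists>c \<in> set C. certifies R T c ([u] @ t @ [u])) \<and>
     (\<forall>s1 \<in> set S. \<forall>s2 \<in> set S. \<exists>c \<in> set C. certifies R T c (s1 @ s2 @ rev s1 @ rev s2)) \<and>
     (\<forall>s \<in> set S. \<forall>i \<in> set s. i < 3)"

definition derived_chain_certified :: "rewrite_system \<Rightarrow> nat list list \<Rightarrow> certificate list \<Rightarrow> bool" where
  "derived_chain_certified R T C \<longleftrightarrow>
     derived_step_certified R [[0], [1], [2]] [[0, 1], [0, 2]] C \<and>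
     derived_step_certified R [[0, 1], [0, 2]] T C \<and>
     derived_step_certified R T [] C"

context group
begin

definition letter :: "'a list \<Rightarrow> nat \<Rightarrow> 'a" where
  "letter gs i = (if i < length gs then gs ! i else \<one>)"

definition word_val :: "'a list \<Rightarrow> nat list \<Rightarrow> 'a" where
  "word_val gs w = foldr (\<lambda>i x. letter gs i \<otimes> x) w \<one>"

definition rules_hold :: "'a list \<Rightarrow> rewrite_system \<Rightarrow> bool" where
  "rules_hold gs R \<longleftrightarrow> (\<forall>(l, r) \<in> set R. word_val gs l = word_val gs r)"

lemma letter_closed: "set gs \<subseteq> carrier G \<Longrightarrow> letter gs i \<in> carrier G"
  unfolding letter_def by auto

lemma word_val_Nil [simp]: "word_val gs [] = \<one>"
  by (simp add: word_val_def)

lemma word_val_Cons [simp]: "word_val gs (i # w) = letter gs i \<otimes> word_val gs w"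
  by (simp add: word_val_def)

lemma word_val_closed: "set gs \<subseteq> carrier G \<Longrightarrow> word_val gs w \<in> carrier G"
  by (induction w) (auto simp: letter_closed)

lemma word_val_append:
  "set gs \<subseteq> carrier G \<Longrightarrow> word_val gs (v @ w) = word_val gs v \<otimes> word_val gs w"
  by (induction v) (auto simp: letter_closed word_val_closed m_assoc)

lemma word_val_rev:
  assumes gs: "set gs \<subseteq> carrier G" and invol: "\<And>x. x \<in> set gs \<Longrightarrow> x \<otimes> x = \<one>"
  shows "word_val gs (rev w) = inv (word_val gs w)"
proof (induction w)
  case Nil
  then show ?case by simp
next
  case (Cons i w)
  have "inv (letter gs i) = letter gs i"
    using invol letter_closed[OF gs, of i] by (auto simp: letter_def intro: inv_equality)
  then show ?case
    using Cons
    by (simp add: word_val_append[OF gs] inv_mult_group letter_closed[OF gs] word_val_closed[OF gs])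
qed

lemma word_val_in_generate:
  assumes gs: "set gs \<subseteq> carrier G" and "\<forall>i \<in> set w. i < length gs"
  shows "word_val gs w \<in> generate G (set gs)"
  using assms(2)
proof (induction w)
  case Nil
  then show ?case by (simp add: generate.one)
next
  case (Cons i w)
  then have "letter gs i \<in> generate G (set gs)"
    unfolding letter_def by (auto intro: generate.incl)
  then show ?case using Cons by (auto intro: generate.eng)
qed

lemma word_val_rewrite_at:
  assumes gs: "set gs \<subseteq> carrier G" and R: "rules_hold gs R"
  shows "word_val gs (rewrite_at R w step) = word_val gs w"
proof -
  obtain p k where step: "step = (p, k)"
    by fastforce
  show ?thesis
  proof (cases "k < length R \<and> take (length (fst (R ! k))) (drop p w) = fst (R ! k)")
    case True
    define l r where "l = fst (R ! k)" and "r = snd (R ! k)"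
    have split: "w = take p w @ l @ drop (p + length l) w"
      using True unfolding l_def by (metis append_take_drop_id drop_drop add.commute)
    have "word_val gs l = word_val gs r"
      using R True nth_mem unfolding rules_hold_def l_def r_def by fastforce
    then have "word_val gs (take p w @ l @ drop (p + length l) w)
        = word_val gs (take p w @ r @ drop (p + length l) w)"
      by (simp add: word_val_append[OF gs])
    then show ?thesis
      using True split step by (simp add: l_def r_def)
  next
    case False
    then show ?thesis
      using step by (simp only: rewrite_at.simps if_not_P if_False)
  qed
qed

lemma word_val_rewrite:
  assumes "set gs \<subseteq> carrier G" and "rules_hold gs R"
  shows "word_val gs (rewrite R w steps) = word_val gs w"
  unfolding rewrite_def
  by (induction steps arbitrary: w) (auto simp: word_val_rewrite_at[OF assms])

lemma certifies_in_generate: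
  assumes gs: "set gs \<subseteq> carrier G" and invol: "\<And>x. x \<in> set gs \<Longrightarrow> x \<otimes> x = \<one>"
    and R: "rules_hold gs R" and cert: "certifies R T c w"
  shows "word_val gs w \<in> generate G (word_val gs ` set T)"
proof -
  have "word_val gs (concat (map (factor T) fs)) \<in> generate G (word_val gs ` set T)" for fs
  proof (induction fs)
    case Nil
    then show ?case by (simp add: generate.one)
  next
    case (Cons f fs)
    have "word_val gs (factor T f) \<in> generate G (word_val gs ` set T)"
      unfolding factor_def
      by (auto simp: word_val_rev[OF gs invol] generate.one intro!: generate.incl generate.inv)
    then show ?case
      using Cons by (simp add: word_val_append[OF gs] generate.eng)
  qed
  then show ?thesis
    using cert word_val_rewrite[OF gs R, of w "fst c"] unfolding certifies_def by metis
qed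

lemma derived_step_certified_subset:
  assumes gs: "set gs \<subseteq> carrier G" and invol: "\<And>x. x \<in> set gs \<Longrightarrow> x \<otimes> x = \<one>"
    and len: "length gs = 3" and R: "rules_hold gs R" and cert: "derived_step_certified R S T C"
  shows "derived G (generate G (word_val gs ` set S)) \<subseteq> generate G (word_val gs ` set T)"
proof -
  let ?N = "generate G (word_val gs ` set T)"
  have T_closed: "word_val gs ` set T \<subseteq> carrier G" and S_closed: "word_val gs ` set S \<subseteq> carrier G"
    using word_val_closed[OF gs] by auto
  have N: "subgroup ?N G"
    by (rule generate_is_subgroup[OF T_closed])
  have in_N: "word_val gs w \<in> ?N" if "\<exists>c \<in> set C. certifies R T c w" for w
    using that certifies_in_generate[OF gs invol R] by blast
  have letter_normalizes: "x \<otimes> n \<otimes> inv x \<in> ?N \<and> inv x \<otimes> n \<otimes> x \<in> ?N"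
    if x: "x \<in> set gs" and n: "n \<in> ?N" for x n
  proof -
    obtain u where u: "u < 3" "x = gs ! u"
      using x len by (metis in_set_conv_nth)
    have x_closed: "x \<in> carrier G"
      using x gs by blast
    have inv_x: "inv x = x"
      using x gs invol by (auto intro: inv_equality)
    have conj_T: "x \<otimes> word_val gs t \<otimes> inv x \<in> ?N" if "t \<in> set T" for t
    proof -
      have "u \<in> set [0, 1, 2]"
        using u by auto
      then have "word_val gs ([u] @ t @ [u]) \<in> ?N"
        using cert that unfolding derived_step_certified_def by (intro in_N) blast
      then show ?thesis
        using u len x_closed inv_x
        by (simp add: letter_def word_val_append[OF gs] word_val_closed[OF gs] m_assoc)
    qed
    have "x \<otimes> n \<otimes> inv x \<in> ?N"
      by (rule conj_generate_in_subgroup[OF T_closed x_closed N _ n]) (use conj_T in auto)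
    then show ?thesis using inv_x by simp
  qed
  have "word_val gs ` set S \<subseteq> generate G (set gs)"
    using cert word_val_in_generate[OF gs] len by (auto simp: derived_step_certified_def)
  then have S_in_gen: "generate G (word_val gs ` set S) \<subseteq> generate G (set gs)"
    using generate_subgroup_incl generate_is_subgroup[OF gs] by blast
  show ?thesis
  proof (rule derived_generate_subset[OF S_closed N])
    show "g \<otimes> n \<otimes> inv g \<in> ?N" if "g \<in> generate G (word_val gs ` set S)" "n \<in> ?N" for g n
      using that S_in_gen letter_normalizes by (blast intro: generate_normalizes[OF gs N])
    show "commutator G s t \<in> ?N"
      if s: "s \<in> word_val gs ` set S" and t: "t \<in> word_val gs ` set S" for s t
    proof -
      obtain v w where vw: "v \<in> set S" "w \<in> set S" "s = word_val gs v" "t = word_val gs w"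
        using s t by blast
      then have "word_val gs (v @ w @ rev v @ rev w) \<in> ?N"
        using cert by (intro in_N) (auto simp: derived_step_certified_def)
      then show ?thesis
        using vw by (simp add: commutator_def word_val_append[OF gs] word_val_rev[OF gs invol]
            word_val_closed[OF gs] m_assoc)
    qed
  qed
qed

lemma derived_chain_certified_trivial:
  assumes abc: "a \<in> carrier G" "b \<in> carrier G" "c \<in> carrier G"
    and invol: "a \<otimes> a = \<one>" "b \<otimes> b = \<one>" "c \<otimes> c = \<one>"
    and R: "rules_hold [a, b, c] R" and cert: "derived_chain_certified R T C"
  shows "(derived G ^^ 3) (generate G {a, b, c}) = {\<one>}"
proof -
  let ?gs = "[a, b, c]" and ?H = "generate G {a, b, c}"
  have gs: "set ?gs \<subseteq> carrier G" and invol': "\<And>x. x \<in> set ?gs \<Longrightarrow> x \<otimes> x = \<one>"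
    using abc invol by auto
  have len: "length ?gs = 3"
    by simp
  note step = derived_step_certified_subset[OF gs invol' len R]
  have gen_abc: "word_val ?gs ` set [[0], [1], [2]] = {a, b, c}"
    using abc by (auto simp: letter_def)
  let ?N1 = "generate G (word_val ?gs ` set [[0, 1], [0, 2]])"
    and ?N2 = "generate G (word_val ?gs ` set T)"
  have L1: "derived G ?H \<subseteq> ?N1"
    using cert step[of "[[0], [1], [2]]"] unfolding derived_chain_certified_def gen_abc by blast
  have L2: "derived G ?N1 \<subseteq> ?N2"
    using cert step unfolding derived_chain_certified_def by blast
  have "derived_step_certified R T [] C"
    using cert unfolding derived_chain_certified_def by blast
  then have L3: "derived G ?N2 \<subseteq> {\<one>}"
    using step[of T "[]"] generate_empty by simp
  have "(derived G ^^ 3) ?H = derived G (derived G (derived G ?H))"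
    by (simp add: numeral_3_eq_3)
  also have "\<dots> \<subseteq> {\<one>}"
    using mono_derived[OF mono_derived[OF L1]] mono_derived[OF L2] L3 by blast
  finally have "(derived G ^^ 3) ?H \<subseteq> {\<one>}" .
  moreover have "\<one> \<in> (derived G ^^ 3) ?H"
    using abc by (intro subgroup.one_closed exp_of_derived_is_subgroup generate_is_subgroup) auto
  ultimately show ?thesis by auto
qed

end

section \<open>Groups generated by three 3-transpositions\<close>

definition braid_or_commute_rules :: "bool \<Rightarrow> nat \<Rightarrow> nat \<Rightarrow> rewrite_system" where
  "braid_or_commute_rules braid i j =
     (if braid then [([i, j, i], [j, i, j]), ([j, i, j], [i, j, i])]
      else [([i, j], [j, i]), ([j, i], [i, j])])"

(* The certificates refer to rules by their index in this list. *)
definition coxeter_rules :: "bool \<Rightarrow> bool \<Rightarrow> bool \<Rightarrow> rewrite_system" where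
  "coxeter_rules b01 b02 b12 =
     [([0, 0], []), ([1, 1], []), ([2, 2], []), ([], [0, 0]), ([], [1, 1]), ([], [2, 2])] @
     braid_or_commute_rules b01 0 1 @ braid_or_commute_rules b02 0 2 @
     braid_or_commute_rules b12 1 2"

(* The certificates were found by a computer search. *)
lemma derived_chain_certified_ccc:
  "derived_chain_certified (coxeter_rules False False False)
  []
  [([(0, 0), (0, 7)], [(0, False)]), ([(0, 0), (0, 9)], [(1, False)]), ([(2, 1), (0, 7)], [(0, False)]), ([(0, 7), (1, 10), (2, 1)], [(1, False)]), ([(0, 9), (2, 10), (1, 2)], [(0, False)]), ([(2, 2), (0, 9)], [(1, False)]), ([(0, 0), (0, 0)], []), ([(0, 6), (1, 0), (0, 1)], []), ([(0, 8), (1, 0), (0, 2)], []), ([(1, 6), (0, 1), (0, 0)], []), ([(0, 1), (0, 1)], []), ([(0, 10), (1, 1), (0, 2)], []), ([(1, 8), (0, 2), (0, 0)], []), ([(1, 10), (0, 2), (0, 1)], []), ([(0, 2), (0, 2)], []), ([(3, 1), (2, 0), (1, 1), (0, 0)], []), ([(0, 6), (1, 0), (3, 8), (4, 0), (0, 10), (1, 1), (0, 2)], []), ([(5, 6), (6, 0), (0, 8), (1, 0), (1, 10), (0, 2), (0, 1)], []), ([(3, 2), (2, 0), (1, 2), (0, 0)], [])]"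
  by code_simp

lemma derived_chain_certified_ccb:
  "derived_chain_certified (coxeter_rules False False True)
  [[2, 1]]
  [([(0, 0), (0, 7)], [(0, False)]), ([(0, 0), (0, 9)], [(1, False)]), ([(2, 1), (0, 7)], [(0, False)]), ([(1, 8), (1, 3), (0, 7)], [(0, False), (1, False), (0, False)]), ([(1, 6), (2, 8), (0, 11), (2, 7), (1, 3), (0, 7)], [(0, False), (1, False), (0, False)]), ([(2, 2), (0, 9)], [(1, False)]), ([(0, 0), (0, 0)], []), ([(0, 6), (1, 0), (0, 1)], []), ([(0, 8), (1, 0), (0, 2)], []), ([(1, 6), (0, 1), (0, 0)], []), ([(0, 1), (0, 1)], []), ([(0, 10), (2, 2), (1, 3), (0, 9)], [(1, False), (0, False)]), ([(1, 8), (0, 2), (0, 0)], []), ([(1, 10), (0, 2), (1, 3), (0, 7)], [(0, False), (1, False)]), ([(0, 2), (0, 2)], []), ([(2, 7), (0, 8), (1, 0)], [(0, False)]), ([(2, 1)], [(0, True)]), ([(0, 2)], [(0, True)]), ([(3, 1), (2, 0), (1, 1), (0, 0)], []), ([(0, 6), (1, 0), (3, 8), (4, 0), (0, 10), (2, 2)], [(0, False)]), ([(5, 6), (6, 0), (0, 8), (1, 0), (1, 10), (0, 2)], [(0, True)]), ([(3, 2), (2, 0), (1, 2), (0, 0)], []), ([(3, 1), (2, 2), (1, 1), (0, 2)], [])]"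
  by code_simp

lemma derived_chain_certified_cbc:
  "derived_chain_certified (coxeter_rules False True False)
  [[0, 2]]
  [([(0, 0), (0, 7)], [(0, False)]), ([(0, 0)], [(1, True)]), ([(2, 1), (0, 7)], [(0, False)]), ([(0, 7), (1, 10), (2, 1)], [(1, False)]), ([(1, 6), (0, 11), (1, 9), (0, 7)], [(0, False), (1, True)]), ([(2, 2)], [(1, True)]), ([(0, 0), (0, 0)], []), ([(0, 6), (1, 0), (0, 1)], []), ([(0, 8), (2, 2)], [(1, True)]), ([(1, 6), (0, 1), (0, 0)], []), ([(0, 1), (0, 1)], []), ([(0, 10), (1, 1), (0, 2)], []), ([(1, 8), (0, 2)], [(1, False)]), ([(1, 10), (0, 2), (0, 1)], []), ([(0, 2), (0, 2)], []), ([(0, 0)], [(0, True)]), ([(0, 7), (1, 10), (2, 1)], [(0, False)]), ([(2, 2)], [(0, True)]), ([(3, 1), (2, 0), (1, 1), (0, 0)], []), ([(0, 6), (1, 0), (0, 10), (1, 1), (1, 8), (0, 2)], [(0, False)]), ([(5, 6), (6, 0), (3, 10), (4, 1), (0, 8), (2, 2)], [(0, True)]), ([(3, 2), (2, 0), (1, 2), (0, 0)], []), ([(3, 2), (2, 0), (1, 2), (0, 0)], [])]"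
  by code_simp

lemma derived_chain_certified_cbb:
  "derived_chain_certified (coxeter_rules False True True)
  [[2, 1, 0, 2], [0, 2, 1, 0, 2, 0]]
  [([(0, 0), (0, 7)], [(0, False)]), ([(0, 0)], [(1, True)]), ([(2, 1), (0, 7)], [(0, False)]), ([(0, 7), (3, 3)], [(0, False), (1, True), (0, False)]), ([(1, 6), (1, 3)], [(1, True), (0, False), (1, False)]), ([(2, 2)], [(1, True)]), ([(0, 0), (0, 0)], []), ([(0, 6), (1, 0), (0, 1)], []), ([(0, 8), (2, 2)], [(1, True)]), ([(1, 6), (0, 1), (0, 0)], []), ([(0, 1), (0, 1)], []), ([(0, 10), (2, 2), (1, 3)], [(1, True), (0, False)]), ([(1, 8), (0, 2)], [(1, False)]), ([(1, 10), (0, 2), (1, 3), (0, 7)], [(0, False), (1, False)]), ([(0, 2), (0, 2)], []), ([], [(1, False)]), ([(0, 0), (4, 0)], [(0, False)]), ([(2, 7), (3, 10), (1, 9), (3, 6), (0, 7), (1, 10), (3, 9)], [(1, False)]), ([(0, 7), (4, 8), (1, 10), (3, 2), (2, 7), (0, 8), (3, 10), (2, 2), (1, 6)], [(0, False)]), ([(0, 2), (2, 2), (1, 5), (0, 5), (1, 11), (4, 3), (3, 7), (4, 5), (2, 9)], [(0, False), (1, False)]), ([(4, 8), (6, 2), (0, 9), (2, 6)], [(1, False)]), ([(3, 1), (2, 0), (1, 1), (0, 0)], []), ([(0, 6), (1, 0), (3, 8), (0, 10), (2, 2)], [(0, False)]), ([(5, 6), (6, 0), (0, 8), (3, 10), (2,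 2), (1, 6)], [(0, False)]), ([(3, 2), (2, 0), (1, 2), (0, 0)], []), ([(3, 2), (5, 2), (4, 0), (3, 1), (3, 2), (2, 0), (1, 1), (0, 2)], []), ([(2, 8), (4, 2), (3, 6), (4, 0), (5, 8), (4, 2), (8, 8), (7, 2), (1, 10), (0, 2), (4, 7), (2, 8), (1, 2), (3, 10), (2, 2), (3, 2), (1, 6), (0, 1), (0, 0)], []), ([(3, 8), (5, 2), (4, 6), (5, 0), (6, 8), (5, 2), (9, 8), (8, 2), (2, 10), (1, 2), (0, 6), (1, 8), (3, 2), (2, 6), (3, 0), (0, 10), (2, 2), (1, 1), (0, 2)], []), ([(5, 0), (4, 2), (7, 0), (6, 2), (5, 0), (4, 1), (5, 0), (4, 2), (3, 0), (2, 1), (1, 2), (0, 0)], [])]"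
  by code_simp

lemma derived_chain_certified_bcc:
  "derived_chain_certified (coxeter_rules True False False)
  [[1, 0]]
  [([(0, 0)], [(0, True)]), ([(0, 0), (0, 9)], [(1, False)]), ([(2, 1)], [(0, True)]), ([(2, 11), (0, 7)], [(0, False), (1, False)]), ([(0, 9), (2, 10), (1, 2)], [(0, False)]), ([(2, 2), (0, 9)], [(1, False)]), ([(0, 0), (0, 0)], []), ([(0, 6), (2, 1)], [(0, True)]), ([(0, 8), (1, 0), (0, 2)], []), ([(1, 6), (0, 1)], [(0, False)]), ([(0, 1), (0, 1)], []), ([(0, 10), (1, 1), (0, 2)], []), ([(1, 8), (0, 2), (0, 0)], []), ([(1, 10), (0, 2), (0, 1)], []), ([(0, 2), (0, 2)], []), ([(2, 0)], [(0, True)]), ([(0, 1)], [(0, True)]), ([(2, 8), (1, 10), (0, 2)], [(0, False)]), ([(3, 1), (2, 0), (1, 1), (0, 0)], []), ([(5, 8), (6, 0), (4, 10), (3, 2), (0, 6), (2, 1)], [(0, False)]), ([(0, 8), (1, 0), (1, 10), (0, 2), (1, 6), (0, 1)], [(0, True)]), ([(3, 2), (2, 0), (1, 2), (0, 0)], []), ([(3, 0), (2, 1), (1, 0), (0, 1)], [])]"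
  by code_simp

lemma derived_chain_certified_bcb:
  "derived_chain_certified (coxeter_rules True False True)
  [[1, 0, 2, 1], [0, 1, 0, 2, 1, 0]]
  [([(0, 0)], [(0, True)]), ([(0, 0), (0, 9)], [(1, False)]), ([(2, 1)], [(0, True)]), ([(1, 8), (1, 3)], [(0, True), (1, False), (0, False)]), ([(0, 9), (1, 11), (3, 3), (2, 9)], [(0, False), (1, False), (0, False)]), ([(2, 2), (0, 9)], [(1, False)]), ([(0, 0), (0, 0)], []), ([(0, 6), (2, 1)], [(0, True)]), ([(0, 8), (1, 0), (0, 2)], []), ([(1, 6), (0, 1)], [(0, False)]), ([(0, 1), (0, 1)], []), ([(0, 10), (2, 2), (1, 3), (0, 9)], [(1, False), (0, False)]), ([(1, 8), (0, 2), (0, 0)], []), ([(1, 10), (0, 2), (1, 3)], [(0, True), (1, False)]), ([(0, 2), (0, 2)], []), ([], [(1, False)]), ([(0, 0), (4, 0)], [(0, False)]), ([(0, 1), (2, 1), (0, 8), (1, 4), (2, 5), (0, 11), (2, 3), (1, 9), (3, 4), (4, 7)], [(0, False), (1, False)]), ([(1, 6), (0, 1), (3, 7), (2, 9)], [(1, False)]), ([(2, 8), (0, 11), (2, 7), (4, 8), (1, 9), (2, 11), (0, 7)], [(1, False)]), ([(1, 6), (6, 8), (3, 10), (5, 2), (2, 8), (3, 6), (1, 10), (0, 2), (1, 9)], [(0, False)]), ([(3, 1), (2, 0), (1, 1), (0, 0)], []), ([(5, 8), (6, 0), (0, 6), (2, 10), (4, 2)], [(0, False)]), ([(0, 8), (1,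 0), (3, 6), (1, 10), (0, 2), (1, 9)], [(0, False)]), ([(3, 2), (2, 0), (1, 2), (0, 0)], []), ([(3, 1), (5, 1), (4, 2), (3, 0), (3, 1), (2, 2), (1, 0), (0, 1)], []), ([(4, 6), (3, 1), (10, 6), (12, 1), (1, 8), (2, 0), (9, 8), (10, 0), (0, 10), (2, 2), (1, 1), (2, 10), (4, 2), (3, 1), (1, 8), (0, 2), (0, 0)], []), ([(5, 6), (4, 1), (11, 6), (13, 1), (2, 8), (3, 0), (10, 8), (11, 0), (1, 10), (3, 2), (2, 1), (0, 8), (1, 0), (1, 10), (0, 2), (1, 2), (0, 1)], []), ([(5, 0), (4, 1), (7, 0), (6, 1), (5, 2), (4, 0), (5, 0), (4, 1), (3, 2), (2, 0), (1, 1), (0, 0)], [])]"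
  by code_simp

lemma derived_chain_certified_bbc:
  "derived_chain_certified (coxeter_rules True True False)
  [[1, 2], [0, 1, 2, 0]]
  [([(0, 0)], [(0, True)]), ([(0, 0)], [(1, True)]), ([(2, 1)], [(0, True)]), ([(2, 11), (0, 7)], [(0, False), (1, False)]), ([(2, 10), (0, 9)], [(1, False), (0, False)]), ([(2, 2)], [(1, True)]), ([(0, 0), (0, 0)], []), ([(0, 6), (2, 1)], [(0, True)]), ([(0, 8), (2, 2)], [(1, True)]), ([(1, 6), (0, 1)], [(0, False)]), ([(0, 1), (0, 1)], []), ([(0, 10), (1, 1), (0, 2)], []), ([(1, 8), (0, 2)], [(1, False)]), ([(1, 10), (0, 2), (0, 1)], []), ([(0, 2), (0, 2)], []), ([], [(1, False)]), ([(0, 0), (2, 0)], [(0, False)]), ([(0, 1), (0, 11)], [(0, False)]), ([(2, 10), (3, 7), (1, 8), (3, 11)], [(0, False), (1, False)]), ([(2, 2), (0, 11)], [(0, False)]), ([(3, 9), (1, 6), (0, 11)], [(0, False), (1, False)]), ([(3, 1), (2, 0), (1, 1), (0, 0)], []), ([(0, 6), (2, 10), (3, 1), (1, 8), (3, 2), (2, 0)], [(0, False)]), ([(5, 6), (3, 10), (4, 1), (0, 8), (2, 2), (1, 0), (0, 11)], [(0, False)]), ([(3, 2), (2, 0), (1, 2), (0, 0)], []), ([(3, 2), (2, 1), (1, 2), (0, 1)], []), ([(4, 9), (2, 6), (0, 10), (1, 1), (4, 6), (2, 10), (3, 1), (1, 8), (0, 2), (2, 10), (1, 2), (1, 1), (0,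 0)], []), ([(5, 9), (3, 6), (1, 10), (2, 1), (5, 6), (3, 10), (4, 1), (0, 8), (2, 2), (1, 0), (1, 10), (0, 2), (0, 1)], []), ([(3, 0), (5, 0), (4, 2), (3, 1), (3, 0), (2, 2), (1, 1), (0, 0)], [])]"
  by code_simp

lemma derived_chain_certified_bbb:
  "derived_chain_certified (coxeter_rules True True True)
  [[1, 0, 2, 1, 0, 2], [0, 2, 1, 0, 2, 1]]
  [([(0, 0)], [(0, True)]), ([(0, 0)], [(1, True)]), ([(2, 1)], [(0, True)]), ([(3, 3)], [(0, True), (1, True), (0, False)]), ([(3, 3)], [(1, True), (0, True), (1, False)]), ([(2, 2)], [(1, True)]), ([(0, 0), (0, 0)], []), ([(0, 6), (2, 1)], [(0, True)]), ([(0, 8), (2, 2)], [(1, True)]), ([(1, 6), (0, 1)], [(0, False)]), ([(0, 1), (0, 1)], []), ([(0, 10), (2, 2), (1, 3)], [(1, True), (0, False)]), ([(1, 8), (0, 2)], [(1, False)]), ([(1, 10), (0, 2), (1, 3)], [(0, True), (1, False)]), ([(0, 2), (0, 2)], []), ([(0, 6), (5, 8), (2, 10), (4, 2)], [(0, False)]), ([(0, 0), (5, 5), (3, 11), (1, 7), (3, 5), (4, 9), (5, 4)], [(0, True), (1, True)]), ([(0, 1)], [(1, False)]), ([(6, 1)], [(0, False)]), ([(6, 2), (5, 5), (3, 11), (1, 7), (3, 5), (4, 9), (5, 4)], [(0, True), (1, True)]), ([(0, 9), (2, 6), (4, 10), (6, 2)], [(1, False)]), ([(3, 1), (2, 0),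 (1, 1), (0, 0)], []), ([(0, 6), (5, 8), (2, 10), (4, 2)], [(0, False)]), ([(5, 6), (0, 8), (3, 10), (2, 2)], [(0, True)]), ([(3, 2), (2, 0), (1, 2), (0, 0)], []), ([(11, 2), (10, 0), (9, 1), (8, 2), (7, 0), (6, 1), (5, 2), (4, 0), (3, 1), (2, 2), (1, 0), (0, 1)], []), ([(17, 1), (4, 8), (6, 2), (14, 8), (13, 2), (5, 6), (3, 10), (2, 2), (5, 10), (7, 2), (7, 6), (6, 1), (4, 8), (3, 2), (1, 6), (0, 1), (1, 10), (3, 2), (2, 1), (1, 2), (0, 0)], []), ([(5, 1), (3, 8), (5, 2), (13, 8), (12, 2), (4, 6), (2, 10), (1, 2), (4, 10), (6, 2), (6, 6), (5, 1), (3, 8), (2, 2), (4, 10), (3, 2), (4, 2), (0, 6), (2, 1), (1, 0), (0, 1)], []), ([(11, 1), (10, 2), (9, 0), (8, 1), (7, 2), (6, 0), (5, 1), (4, 2), (3, 0), (2, 1), (1, 2), (0, 0)], [])]"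
  by code_simp
lemma derived_chain_certified_coxeter_rules:
  "\<exists>T C. derived_chain_certified (coxeter_rules b01 b02 b12) T C"
  using derived_chain_certified_ccc derived_chain_certified_ccb derived_chain_certified_cbc
    derived_chain_certified_cbb derived_chain_certified_bcc derived_chain_certified_bcb
    derived_chain_certified_bbc derived_chain_certified_bbb
  by (cases b01; cases b02; cases b12) auto

context group
begin

definition coxeter_relation :: "bool \<Rightarrow> 'a \<Rightarrow> 'a \<Rightarrow> bool" where
  "coxeter_relation braid x y \<longleftrightarrow> (if braid then x \<otimes> y \<otimes> x = y \<otimes> x \<otimes> y else x \<otimes> y = y \<otimes> x)"

lemma rules_hold_coxeter_rules:
  assumes "a \<in> carrier G" "b \<in> carrier G" "c \<in> carrier G"
    and "a \<otimes> a = \<one>" "b \<otimes> b = \<one>" "c \<otimes> c = \<one>"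
    and "coxeter_relation b01 a b" "coxeter_relation b02 a c" "coxeter_relation b12 b c"
  shows "rules_hold [a, b, c] (coxeter_rules b01 b02 b12)"
  using assms
  unfolding rules_hold_def coxeter_rules_def braid_or_commute_rules_def coxeter_relation_def
  by (cases b01; cases b02; cases b12) (auto simp: letter_def m_assoc)

lemma involutions_coxeter_relation:
  assumes x: "x \<in> carrier G" and y: "y \<in> carrier G" and "x \<otimes> x = \<one>" "y \<otimes> y = \<one>"
    and ord: "ord (x \<otimes> y) \<in> {1, 2, 3}"
  shows "\<exists>braid. coxeter_relation braid x y"
proof -
  have inv_x: "inv x = x" and inv_y: "inv y = y"
    using assms by (auto intro: inv_equality)
  have pow: "(x \<otimes> y) [^] ord (x \<otimes> y) = \<one>"
    using x y by simp
  from ord consider "ord (x \<otimes> y) = 1" | "ord (x \<otimes> y) = 2" | "ord (x \<otimes> y) = 3"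
    by auto
  then show ?thesis
  proof cases
    case 1
    then have "x \<otimes> y = \<one>"
      using pow x y by simp
    then have "inv y = x"
      by (rule inv_equality) (use x y in auto)
    then show ?thesis
      using inv_y by (metis coxeter_relation_def)
  next
    case 2
    then have "(x \<otimes> y) \<otimes> (x \<otimes> y) = \<one>"
      using pow x y by (simp add: numeral_2_eq_2)
    then have "inv (x \<otimes> y) = x \<otimes> y"
      using x y by (intro inv_equality) auto
    then have "x \<otimes> y = y \<otimes> x"
      using x y inv_x inv_y by (simp add: inv_mult_group)
    then show ?thesis
      by (metis coxeter_relation_def)
  next
    case 3
    then have "(x \<otimes> y \<otimes> x) \<otimes> (y \<otimes> x \<otimes> y) = \<one>"
      using pow x y by (simp add: numeral_3_eq_3 m_assoc)
    then have "inv (y \<otimes> x \<otimes> y) = x \<otimes> y \<otimes> x"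
      using x y by (intro inv_equality) auto
    then have "x \<otimes> y \<otimes> x = y \<otimes> x \<otimes> y"
      using x y inv_x inv_y by (simp add: inv_mult_group m_assoc)
    then show ?thesis
      by (metis coxeter_relation_def)
  qed
qed

lemma derived_series_three_involutions:
  assumes abc: "a \<in> carrier G" "b \<in> carrier G" "c \<in> carrier G"
    and invol: "a \<otimes> a = \<one>" "b \<otimes> b = \<one>" "c \<otimes> c = \<one>"
    and ord: "ord (a \<otimes> b) \<in> {1, 2, 3}" "ord (a \<otimes> c) \<in> {1, 2, 3}" "ord (b \<otimes> c) \<in> {1, 2, 3}"
  shows "(derived G ^^ 3) (generate G {a, b, c}) = {\<one>}"
proof -
  obtain b01 b02 b12 where
    "coxeter_relation b01 a b" "coxeter_relation b02 a c" "coxeter_relation b12 b c"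
    using involutions_coxeter_relation abc invol ord by meson
  then have R: "rules_hold [a, b, c] (coxeter_rules b01 b02 b12)"
    using rules_hold_coxeter_rules abc invol by blast
  obtain T C where "derived_chain_certified (coxeter_rules b01 b02 b12) T C"
    using derived_chain_certified_coxeter_rules by blast
  then show ?thesis
    using derived_chain_certified_trivial[OF abc invol R] by blast
qed

lemma solvable_subgroup_if_derived_trivial:
  assumes K: "subgroup K G" and trivial: "(derived G ^^ n) K = {\<one>}"
  shows "solvable (G\<lparr>carrier := K\<rparr>)"
proof -
  interpret K: group "G\<lparr>carrier := K\<rparr>"
    by (rule subgroup_imp_group[OF K])
  have "(derived (G\<lparr>carrier := K\<rparr>) ^^ m) K = (derived G ^^ m) K \<and> (derived G ^^ m) K \<subseteq> K" for m
    by (induction m) (auto simp: derived_consistent[OF _ K] derived_incl[OF _ K])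
  then show ?thesis
    using trivial K.solvable_iff_trivial_derived_seq by auto
qed

lemma solvable_generate_in_three_involutions:
  assumes abc: "a \<in> carrier G" "b \<in> carrier G" "c \<in> carrier G"
    and invol: "a \<otimes> a = \<one>" "b \<otimes> b = \<one>" "c \<otimes> c = \<one>"
    and ord: "ord (a \<otimes> b) \<in> {1, 2, 3}" "ord (a \<otimes> c) \<in> {1, 2, 3}" "ord (b \<otimes> c) \<in> {1, 2, 3}"
    and S: "S \<subseteq> generate G {a, b, c}"
  shows "solvable (G\<lparr>carrier := generate G S\<rparr>)"
proof -
  have H: "subgroup (generate G {a, b, c}) G"
    using abc by (intro generate_is_subgroup) auto
  have S_closed: "S \<subseteq> carrier G"
    using S subgroup.subset[OF H] by blast
  have K: "subgroup (generate G S) G"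
    by (rule generate_is_subgroup[OF S_closed])
  have "(derived G ^^ 3) (generate G S) \<subseteq> {\<one>}"
    using mono_exp_of_derived[OF generate_subgroup_incl[OF S H]]
      derived_series_three_involutions[OF abc invol ord] by blast
  then have "(derived G ^^ 3) (generate G S) = {\<one>}"
    using subgroup.one_closed[OF exp_of_derived_is_subgroup[OF K]] by blast
  then show ?thesis
    by (rule solvable_subgroup_if_derived_trivial[OF K])
qed

lemma commutator_involution:
  assumes "a \<in> carrier G" "d \<in> carrier G" "d \<otimes> d = \<one>"
  shows "commutator G a d = (a \<otimes> d \<otimes> inv a) \<otimes> d"
proof -
  have "inv d = d" using assms by (auto intro: inv_equality)
  then show ?thesis by (simp add: commutator_def)
qed

lemma three_transp_class_closed:
  "three_transp_class G D \<Longrightarrow> D \<subseteq> carrier G"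
  unfolding three_transp_class_def by auto

lemma three_transp_class_conj:
  assumes D: "three_transp_class G D" and d: "d \<in> D" and g: "g \<in> carrier G"
  shows "g \<otimes> d \<otimes> inv g \<in> D"
proof -
  obtain d0 where d0: "d0 \<in> carrier G" and D_eq: "D = {h \<otimes> d0 \<otimes> inv h | h. h \<in> carrier G}"
    using D unfolding three_transp_class_def by blast
  obtain h where h: "h \<in> carrier G" "d = h \<otimes> d0 \<otimes> inv h"
    using d D_eq by blast
  have "g \<otimes> d \<otimes> inv g = (g \<otimes> h) \<otimes> d0 \<otimes> inv (g \<otimes> h)"
    using g h d0 by (simp add: m_assoc inv_mult_group)
  then show ?thesis
    using D_eq g h by auto
qed

lemma three_transp_class_involution:
  assumes D: "three_transp_class G D" and d: "d \<in> D"
  shows "d \<otimes> d = \<one>"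
proof -
  have "d \<in> carrier G" "ord d = 2"
    using D d three_transp_class_closed unfolding three_transp_class_def by blast+
  then show ?thesis
    using pow_ord_eq_1[of d] by (simp add: numeral_2_eq_2)
qed

lemma three_transp_class_ord:
  "three_transp_class G D \<Longrightarrow> x \<in> D \<Longrightarrow> y \<in> D \<Longrightarrow> ord (x \<otimes> y) \<in> {1, 2, 3}"
  unfolding three_transp_class_def by blast

lemma three_transp_class_solvable_commutators:
  assumes D: "three_transp_class G D" and d: "d \<in> D"
    and a1: "a1 \<in> carrier G" and a2: "a2 \<in> carrier G"
  shows "solvable (G\<lparr>carrier := generate G {commutator G a1 d, commutator G a2 d}\<rparr>)"
proof -
  define e1 e2 where "e1 = a1 \<otimes> d \<otimes> inv a1" and "e2 = a2 \<otimes> d \<otimes> inv a2"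
  have in_D: "d \<in> D" "e1 \<in> D" "e2 \<in> D"
    unfolding e1_def e2_def using d a1 a2 three_transp_class_conj[OF D] by auto
  have closed: "d \<in> carrier G" "e1 \<in> carrier G" "e2 \<in> carrier G"
    using in_D three_transp_class_closed[OF D] by auto
  have invol: "d \<otimes> d = \<one>" "e1 \<otimes> e1 = \<one>" "e2 \<otimes> e2 = \<one>"
    using in_D three_transp_class_involution[OF D] by auto
  have ord: "ord (d \<otimes> e1) \<in> {1, 2, 3}" "ord (d \<otimes> e2) \<in> {1, 2, 3}" "ord (e1 \<otimes> e2) \<in> {1, 2, 3}"
    using in_D three_transp_class_ord[OF D] by auto
  have "commutator G a1 d = e1 \<otimes> d" "commutator G a2 d = e2 \<otimes> d"
    unfolding e1_def e2_def using a1 a2 closed(1) invol(1) by (simp_all add: commutator_involution)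
  then have "{commutator G a1 d, commutator G a2 d} \<subseteq> generate G {d, e1, e2}"
    by (simp add: generate.eng generate.incl)
  then show ?thesis
    by (rule solvable_generate_in_three_involutions[OF closed invol ord])
qed

end

theorem proposition8p2:
  fixes G :: "('a, 'b) monoid_scheme" and D :: "'a set"
  assumes "group G" and "finite (carrier G)" and "three_transp_class G D"
  shows "\<forall>d \<in> D. \<forall>a1 \<in> carrier G. \<forall>a2 \<in> carrier G.
           solvable (G\<lparr>carrier := generate G {commutator G a1 d, commutator G a2 d}\<rparr>)"
  using group.three_transp_class_solvable_commutators[OF assms(1,3)] by blast

end
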